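(* For $n\ge 5$, every two bases of $\Theta_n$ intersect, every two bases of $\Theta_n^\star$ intersect, and $f(\Theta_n)\le n-2$.
   Context: For $n\ge 1$, $\Theta_n$ is the matroid on ground set $X\cup Y$ with $X=\{x_1,\dots,x_n\}$, $Y=\{y_1,\dots,y_n\}$ disjoint, whose bases are the $n$-subsets $B\subseteq X\cup Y$ with $|B\cap X|\le 2$ and $B\neq(Y\setminus\{y_i\})\cup\{x_i\}$ for all $i$. For a matroid $M$, the distance between bases $B,B'$ is $|B\triangle B'|$; the Borsuk number $f(M)$ is the minimum number of parts in a partition of the set of bases in which each part has diameter strictly smaller than the diameter of the set of all bases ($f(M)=+\infty$ if $M$ has one basis). *)

theory Defs
  imports Main "HOL-Library.Extended_Nat"
begin

text \<open>Ground set of Theta_n: x_i is Inl i, y_i is Inr i, for i in {1..n}.\<close>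

definition theta_X :: "nat \<Rightarrow> (nat + nat) set" where
  "theta_X n = Inl ` {1..n}"

definition theta_Y :: "nat \<Rightarrow> (nat + nat) set" where
  "theta_Y n = Inr ` {1..n}"

definition theta_ground :: "nat \<Rightarrow> (nat + nat) set" where
  "theta_ground n = theta_X n \<union> theta_Y n"

definition theta_bases :: "nat \<Rightarrow> (nat + nat) set set" where
  "theta_bases n = {B. B \<subseteq> theta_ground n \<and> card B = n \<and> card (B \<inter> theta_X n) \<le> 2
       \<and> (\<forall>i\<in>{1..n}. B \<noteq> (theta_Y n - {Inr i}) \<union> {Inl i})}"

definition dual_bases :: "'a set \<Rightarrow> 'a set set \<Rightarrow> 'a set set" where
  "dual_bases E \<B> = (\<lambda>B. E - B) ` \<B>"

definition sdist :: "'a set \<Rightarrow> 'a set \<Rightarrow> nat" where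
  "sdist B B' = card ((B - B') \<union> (B' - B))"

definition diam :: "'a set set \<Rightarrow> nat" where
  "diam \<B> = Max {sdist B B' | B B'. B \<in> \<B> \<and> B' \<in> \<B>}"

definition small_partition :: "'a set set \<Rightarrow> nat \<Rightarrow> 'a set set set \<Rightarrow> nat \<Rightarrow> bool" where
  "small_partition \<B> d P k \<longleftrightarrow>
     finite P \<and> card P = k \<and> \<Union>P = \<B> \<and> {} \<notin> P \<and>
     (\<forall>p\<in>P. \<forall>q\<in>P. p \<noteq> q \<longrightarrow> p \<inter> q = {}) \<and>
     (\<forall>p\<in>P. \<forall>B\<in>p. \<forall>B'\<in>p. sdist B B' < d)"

definition borsuk :: "'a set set \<Rightarrow> enat" where
  "borsuk \<B> = (if card \<B> \<le> 1 then \<infinity>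
     else enat (LEAST k. \<exists>P. small_partition \<B> (diam \<B>) P k))"

end

theory Submission
  imports Defs
begin

text \<open>A basis has at most two elements in X and hence at least n - 2 in Y, and two
(n - 2)-subsets of the n-set Y meet when n \<ge> 5. Dually, the complement of a basis
contains at least n - 2 elements of X.

For the Borsuk bound, classify a basis by the index c of its first element x_c of X,
putting all bases that avoid x_1, ..., x_{n-3} into the class n - 2. Counting elements
of Y as above, two bases B, B' satisfy
|B \<inter> B'| \<ge> n + |B \<inter> B' \<inter> X| - |B \<inter> X| - |B' \<inter> X|,
and this is at least n - 3 if they lie in one class: in a class c \<le> n - 3 both
contain x_c, and in the last class both X-parts lie in {x_{n-2}, x_{n-1}, x_n}.
So bases of one class are at distance at most 6, whereas the bases
{x_1, x_2} \<union> Y - {y_1, y_2} and {x_3, x_4} \<union> Y - {y_3, y_4} are at distance 8.\<close>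

lemma card_add_le_card_Int:
  assumes "finite U" "A \<subseteq> U" "C \<subseteq> U"
  shows "card A + card C \<le> card U + card (A \<inter> C)"
proof -
  have "finite A" "finite C" using assms by (auto intro: finite_subset)
  then have "card A + card C = card (A \<union> C) + card (A \<inter> C)" by (rule card_Un_Int)
  moreover have "card (A \<union> C) \<le> card U" using assms by (simp add: card_mono)
  ultimately show ?thesis by linarith
qed

lemma Int_not_empty_if_card_add_gt:
  assumes "finite U" "A \<subseteq> U" "C \<subseteq> U" "card U < card A + card C"
  shows "A \<inter> C \<noteq> {}"
  using card_add_le_card_Int[OF assms(1-3)] assms(4) by auto

lemma sdist_eq_card_Int:
  assumes "finite B" "finite B'" "card B = k" "card B' = k"
  shows "sdist B B' = 2 * (k - card (B \<inter> B'))"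
proof -
  have "sdist B B' = card (B - B') + card (B' - B)"
    unfolding sdist_def by (rule card_Un_disjoint) (use assms in auto)
  moreover have "card (B - B') = k - card (B \<inter> B')"
    using assms by (simp add: card_Diff_subset_Int)
  moreover have "card (B' - B) = k - card (B \<inter> B')"
    using assms by (simp add: card_Diff_subset_Int inf_commute)
  ultimately show ?thesis by simp
qed

lemma sdist_le_diam:
  assumes "finite \<B>" "B \<in> \<B>" "B' \<in> \<B>"
  shows "sdist B B' \<le> diam \<B>"
proof -
  have "{sdist B B' | B B'. B \<in> \<B> \<and> B' \<in> \<B>} = (\<lambda>(B, B'). sdist B B') ` (\<B> \<times> \<B>)"
    by auto
  then have "finite {sdist B B' | B B'. B \<in> \<B> \<and> B' \<in> \<B>}" using assms(1) by simp
  then show ?thesis unfolding diam_def by (rule Max_ge) (use assms in blast)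
qed

lemma small_partition_fibres:
  assumes surj: "f ` \<B> = K" and "finite K"
    and close: "\<And>B B'. B \<in> \<B> \<Longrightarrow> B' \<in> \<B> \<Longrightarrow> f B = f B' \<Longrightarrow> sdist B B' < d"
  shows "small_partition \<B> d ((\<lambda>c. {B \<in> \<B>. f B = c}) ` K) (card K)"
  unfolding small_partition_def
proof (intro conjI ballI impI)
  let ?fibre = "\<lambda>c. {B \<in> \<B>. f B = c}"
  have fibre_ne: "?fibre c \<noteq> {}" if "c \<in> K" for c
    using that surj by blast
  have "inj_on ?fibre K"
  proof (rule inj_onI)
    fix c c' assume "c \<in> K" "?fibre c = ?fibre c'"
    then show "c = c'" using fibre_ne by blast
  qed
  then show "card (?fibre ` K) = card K" by (rule card_image)
  show "finite (?fibre ` K)" using \<open>finite K\<close> by simp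
  show "\<Union> (?fibre ` K) = \<B>" using surj by blast
  show "{} \<notin> ?fibre ` K" using fibre_ne by fastforce
  show "p \<inter> q = {}" if p: "p \<in> ?fibre ` K" and q: "q \<in> ?fibre ` K" and "p \<noteq> q" for p q
  proof -
    obtain c c' where "p = ?fibre c" "q = ?fibre c'" using p q by blast
    with \<open>p \<noteq> q\<close> show ?thesis by (cases "c = c'") auto
  qed
  show "sdist B B' < d" if "p \<in> ?fibre ` K" "B \<in> p" "B' \<in> p" for p B B'
    using that by (auto intro: close)
qed

lemma borsuk_le_if_small_partition:
  assumes "2 \<le> card \<B>" "small_partition \<B> (diam \<B>) P k"
  shows "borsuk \<B> \<le> enat k"
proof -
  have "(LEAST k. \<exists>P. small_partition \<B> (diam \<B>) P k) \<le> k"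
    by (rule Least_le) (use assms(2) in blast)
  then show ?thesis using assms(1) by (simp add: borsuk_def)
qed

lemma Inl_in_theta_X_iff [simp]: "Inl i \<in> theta_X n \<longleftrightarrow> i \<in> {1..n}"
  by (auto simp: theta_X_def)

lemma Inr_in_theta_Y_iff [simp]: "Inr i \<in> theta_Y n \<longleftrightarrow> i \<in> {1..n}"
  by (auto simp: theta_Y_def)

lemma Inl_notin_theta_Y [simp]: "Inl i \<notin> theta_Y n"
  by (auto simp: theta_Y_def)

lemma finite_theta_X [simp]: "finite (theta_X n)"
  by (simp add: theta_X_def)

lemma finite_theta_Y [simp]: "finite (theta_Y n)"
  by (simp add: theta_Y_def)

lemma card_theta_X [simp]: "card (theta_X n) = n"
  by (simp add: theta_X_def card_image)

lemma card_theta_Y [simp]: "card (theta_Y n) = n"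
  by (simp add: theta_Y_def card_image)

lemma finite_theta_ground [simp]: "finite (theta_ground n)"
  by (simp add: theta_ground_def)

lemma card_split_theta_ground:
  assumes "D \<subseteq> theta_ground n"
  shows "card D = card (D \<inter> theta_X n) + card (D \<inter> theta_Y n)"
proof -
  have "finite D" using assms by (rule finite_subset) simp
  have "D = (D \<inter> theta_X n) \<union> (D \<inter> theta_Y n)" using assms by (auto simp: theta_ground_def)
  also have "card \<dots> = card (D \<inter> theta_X n) + card (D \<inter> theta_Y n)"
    by (rule card_Un_disjoint) (use \<open>finite D\<close> in \<open>auto simp: theta_X_def\<close>)
  finally show ?thesis .
qed

lemma theta_basis_subset: "B \<in> theta_bases n \<Longrightarrow> B \<subseteq> theta_ground n"
  by (simp add: theta_bases_def)

lemma theta_basis_finite: "B \<in> theta_bases n \<Longrightarrow> finite B"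
  using theta_basis_subset finite_theta_ground finite_subset by blast

lemma theta_basis_card: "B \<in> theta_bases n \<Longrightarrow> card B = n"
  by (simp add: theta_bases_def)

lemma theta_basis_card_X: "B \<in> theta_bases n \<Longrightarrow> card (B \<inter> theta_X n) \<le> 2"
  by (simp add: theta_bases_def)

lemma theta_basis_card_split:
  "B \<in> theta_bases n \<Longrightarrow> card (B \<inter> theta_X n) + card (B \<inter> theta_Y n) = n"
  using card_split_theta_ground[OF theta_basis_subset] theta_basis_card by metis

lemma finite_theta_bases: "finite (theta_bases n)"
  by (rule finite_subset[of _ "Pow (theta_ground n)"]) (auto simp: theta_bases_def)

lemma theta_bases_intersecting:
  assumes "5 \<le> n" "B \<in> theta_bases n" "B' \<in> theta_bases n"
  shows "B \<inter> B' \<noteq> {}"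
proof -
  have "(B \<inter> theta_Y n) \<inter> (B' \<inter> theta_Y n) \<noteq> {}"
  proof (rule Int_not_empty_if_card_add_gt[of "theta_Y n"])
    show "card (theta_Y n) < card (B \<inter> theta_Y n) + card (B' \<inter> theta_Y n)"
      using assms(1) theta_basis_card_split[OF assms(2)] theta_basis_card_split[OF assms(3)]
        theta_basis_card_X[OF assms(2)] theta_basis_card_X[OF assms(3)] by simp
  qed auto
  then show ?thesis by blast
qed

lemma theta_dual_bases_intersecting:
  assumes "5 \<le> n" "B \<in> theta_bases n" "B' \<in> theta_bases n"
  shows "(theta_ground n - B) \<inter> (theta_ground n - B') \<noteq> {}"
proof -
  have X_minus_basis: "n \<le> card (theta_X n - D) + 2" if "D \<in> theta_bases n" for D
    using theta_basis_card_X[OF that] card_Diff_subset_Int[of "theta_X n" D]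
    by (simp add: inf_commute)
  have "(theta_X n - B) \<inter> (theta_X n - B') \<noteq> {}"
    using assms X_minus_basis[OF assms(2)] X_minus_basis[OF assms(3)]
    by (intro Int_not_empty_if_card_add_gt[of "theta_X n"]) auto
  then show ?thesis by (auto simp: theta_ground_def)
qed

lemma exchange_in_theta_bases:
  assumes A: "A \<subseteq> {1..n}" and P: "P \<subseteq> {1..n}" and "card A = card P" "card A \<le> 2"
    and not_circuit: "\<And>i. A = {i} \<Longrightarrow> P \<noteq> {i}"
  shows "Inl ` A \<union> (theta_Y n - Inr ` P) \<in> theta_bases n"
proof -
  let ?B = "Inl ` A \<union> (theta_Y n - Inr ` P)"
  have sub: "?B \<subseteq> theta_ground n" using A by (auto simp: theta_ground_def)
  have X_part: "?B \<inter> theta_X n = Inl ` A" using A by (auto simp: theta_X_def)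
  have Y_part: "?B \<inter> theta_Y n = theta_Y n - Inr ` P" by auto
  have "card P \<le> n" using card_mono[OF _ P] by simp
  moreover have "card (theta_Y n - Inr ` P) = n - card P"
    using P finite_subset[OF P] by (subst card_Diff_subset) (auto simp: card_image)
  ultimately have "card ?B = n"
    using card_split_theta_ground[OF sub] X_part Y_part \<open>card A = card P\<close>
    by (simp add: card_image)
  moreover have "?B \<noteq> theta_Y n - {Inr i} \<union> {Inl i}" for i
  proof
    assume eq: "?B = theta_Y n - {Inr i} \<union> {Inl i}"
    have "j \<in> A \<longleftrightarrow> j = i" for j
      using arg_cong[where f = "\<lambda>S. Inl j \<in> S", OF eq] by auto
    then have "A = {i}" by blast
    have "j \<in> P \<longleftrightarrow> j = i" for j
      using arg_cong[where f = "\<lambda>S. Inr j \<in> S", OF eq] \<open>A = {i}\<close> A P by auto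
    then have "P = {i}" by blast
    with \<open>A = {i}\<close> show False using not_circuit by blast
  qed
  ultimately show ?thesis
    using sub X_part \<open>card A \<le> 2\<close> by (simp add: theta_bases_def card_image)
qed

lemma theta_bases_card_Int_ge:
  assumes "B \<in> theta_bases n" "B' \<in> theta_bases n"
  shows "n + card (B \<inter> B' \<inter> theta_X n)
    \<le> card (B \<inter> B') + card (B \<inter> theta_X n) + card (B' \<inter> theta_X n)"
proof -
  have "card (B \<inter> theta_Y n) + card (B' \<inter> theta_Y n)
      \<le> card (theta_Y n) + card ((B \<inter> theta_Y n) \<inter> (B' \<inter> theta_Y n))"
    by (rule card_add_le_card_Int) auto
  moreover have "card (B \<inter> B') = card (B \<inter> B' \<inter> theta_X n) + card (B \<inter> B' \<inter> theta_Y n)"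
    using theta_basis_subset[OF assms(1)] by (intro card_split_theta_ground) auto
  ultimately show ?thesis
    using theta_basis_card_split[OF assms(1)] theta_basis_card_split[OF assms(2)]
    by (simp add: Int_ac)
qed

definition theta_class :: "nat \<Rightarrow> (nat + nat) set \<Rightarrow> nat" where
  "theta_class n B = (LEAST c. c = n - 2 \<or> Inl c \<in> B)"

lemma theta_class_le: "theta_class n B \<le> n - 2"
  unfolding theta_class_def by (rule Least_le) simp

lemma theta_class_cases: "theta_class n B = n - 2 \<or> Inl (theta_class n B) \<in> B"
  unfolding theta_class_def by (rule LeastI[of _ "n - 2"]) simp

lemma theta_class_minimal: "i < theta_class n B \<Longrightarrow> Inl i \<notin> B"
  unfolding theta_class_def using not_less_Least by fastforce

lemma theta_class_positive:
  assumes "3 \<le> n" "B \<in> theta_bases n"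
  shows "1 \<le> theta_class n B"
proof (rule ccontr)
  assume "\<not> 1 \<le> theta_class n B"
  then have "theta_class n B = 0" by simp
  moreover have "Inl 0 \<notin> B"
    using theta_basis_subset[OF assms(2)] by (auto simp: theta_ground_def)
  ultimately show False using theta_class_cases[of n B] assms(1) by auto
qed

lemma theta_class_image:
  assumes "3 \<le> n"
  shows "theta_class n ` theta_bases n = {1..n - 2}"
proof
  show "theta_class n ` theta_bases n \<subseteq> {1..n - 2}"
    using theta_class_le theta_class_positive[OF assms] by auto
  show "{1..n - 2} \<subseteq> theta_class n ` theta_bases n"
  proof
    fix c assume c: "c \<in> {1..n - 2}"
    let ?B = "Inl ` {c} \<union> (theta_Y n - Inr ` {c + 1})"
    have "?B \<in> theta_bases n"
      by (rule exchange_in_theta_bases) (use c in auto)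
    moreover have "theta_class n ?B = c"
      unfolding theta_class_def by (rule Least_equality) (use c in auto)
    ultimately show "c \<in> theta_class n ` theta_bases n" by (metis imageI)
  qed
qed

lemma card_Int_ge_if_theta_class_eq:
  assumes "5 \<le> n" "B \<in> theta_bases n" "B' \<in> theta_bases n"
    and same_class: "theta_class n B = theta_class n B'"
  shows "n \<le> card (B \<inter> B') + 3"
proof -
  let ?c = "theta_class n B"
  have "card (B \<inter> theta_X n) + card (B' \<inter> theta_X n) \<le> card (B \<inter> B' \<inter> theta_X n) + 3"
  proof (cases "?c = n - 2")
    case False
    then have "Inl ?c \<in> B \<inter> B' \<inter> theta_X n"
      using theta_class_cases[of n B] theta_class_cases[of n B'] same_class
        theta_class_le[of n B] theta_class_positive[OF _ assms(2)] assms(1) by auto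
    then have "1 \<le> card (B \<inter> B' \<inter> theta_X n)"
      using card_0_eq[of "B \<inter> B' \<inter> theta_X n"] by fastforce
    then show ?thesis using theta_basis_card_X[OF assms(2)] theta_basis_card_X[OF assms(3)] by simp
  next
    case True
    let ?Z = "Inl ` {n - 2..n} :: (nat + nat) set"
    have last_three: "D \<inter> theta_X n \<subseteq> ?Z" if "theta_class n D = n - 2" for D
    proof
      fix x assume "x \<in> D \<inter> theta_X n"
      then obtain i where "x = Inl i" "i \<le> n" "Inl i \<in> D" by (auto simp: theta_X_def)
      moreover have "\<not> i < n - 2" using theta_class_minimal[of i n D] that \<open>Inl i \<in> D\<close> by auto
      ultimately show "x \<in> ?Z" by auto
    qed
    have "card (B \<inter> theta_X n) + card (B' \<inter> theta_X n)
        \<le> card ?Z + card ((B \<inter> theta_X n) \<inter> (B' \<inter> theta_X n))"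
      by (rule card_add_le_card_Int)
        (use last_three True same_class in auto)
    moreover have "card ?Z = 3" using assms(1) by (simp add: card_image)
    ultimately show ?thesis by (simp add: Int_ac)
  qed
  then show ?thesis using theta_bases_card_Int_ge[OF assms(2,3)] by linarith
qed

lemma theta_bases_far_apart:
  assumes "4 \<le> n"
  obtains B B' where "B \<in> theta_bases n" "B' \<in> theta_bases n" "sdist B B' = 8"
proof
  let ?B1 = "Inl ` {1, 2} \<union> (theta_Y n - Inr ` {1, 2})"
  let ?B2 = "Inl ` {3, 4} \<union> (theta_Y n - Inr ` {3, 4})"
  show "?B1 \<in> theta_bases n" "?B2 \<in> theta_bases n"
    by (rule exchange_in_theta_bases; use assms in auto)+
  have "(?B1 - ?B2) \<union> (?B2 - ?B1) = {Inl 1, Inl 2, Inl 3, Inl 4, Inr 1, Inr 2, Inr 3, Inr 4}"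
    using assms by auto
  then show "sdist ?B1 ?B2 = 8" by (simp add: sdist_def)
qed

lemma borsuk_theta_le:
  assumes "5 \<le> n"
  shows "borsuk (theta_bases n) \<le> enat (n - 2)"
proof -
  from assms have "4 \<le> n" by simp
  then obtain B1 B2 where B12: "B1 \<in> theta_bases n" "B2 \<in> theta_bases n" "sdist B1 B2 = 8"
    by (rule theta_bases_far_apart)
  have diam_ge: "8 \<le> diam (theta_bases n)"
    using sdist_le_diam[OF finite_theta_bases B12(1,2)] B12(3) by simp
  have "B1 \<noteq> B2" using B12(3) by (auto simp: sdist_def)
  then have "card {B1, B2} = 2" by simp
  then have "2 \<le> card (theta_bases n)"
    using card_mono[OF finite_theta_bases, of "{B1, B2}"] B12(1,2) by simp
  have close: "sdist B B' < diam (theta_bases n)"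
    if "B \<in> theta_bases n" "B' \<in> theta_bases n" "theta_class n B = theta_class n B'" for B B'
  proof -
    have "sdist B B' = 2 * (n - card (B \<inter> B'))"
      using that by (intro sdist_eq_card_Int) (auto intro: theta_basis_finite theta_basis_card)
    then show ?thesis using card_Int_ge_if_theta_class_eq[OF assms that] diam_ge by linarith
  qed
  have "small_partition (theta_bases n) (diam (theta_bases n))
      ((\<lambda>c. {B \<in> theta_bases n. theta_class n B = c}) ` {1..n - 2}) (card {1..n - 2})"
    by (rule small_partition_fibres) (use theta_class_image assms close in auto)
  then show ?thesis
    using borsuk_le_if_small_partition[OF \<open>2 \<le> card (theta_bases n)\<close>] by simp
qed

theorem proposition6p1:
  fixes n :: nat
  assumes "n \<ge> 5"
  shows "(\<forall>B\<in>theta_bases n. \<forall>B'\<in>theta_bases n. B \<inter> B' \<noteq> {})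
    \<and> (\<forall>B\<in>dual_bases (theta_ground n) (theta_bases n).
         \<forall>B'\<in>dual_bases (theta_ground n) (theta_bases n). B \<inter> B' \<noteq> {})
    \<and> borsuk (theta_bases n) \<le> enat (n - 2)"
  using theta_bases_intersecting[OF assms] theta_dual_bases_intersecting[OF assms]
    borsuk_theta_le[OF assms]
  by (auto simp: dual_bases_def)

end
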